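(* Let $k$ be a field, $k[x]$ a polynomial ring in one variable, $n\ge1$, $u_i,v_i\in k^*$, and let $p_1(x),\dots,p_n(x)\in k[x]\setminus\{0\}$ all have the same set of prime factors. Let $a_1,\dots,a_n,b_1,\dots,b_n$ be positive integers with $\gcd(a_i,b_1\cdots b_i)=1$ for each $i$, and define $$B_n=k[x][z_0,\dots,z_{n+1}]/\big(p_i(x)z_{i+1}+u_iz_i^{a_i}+v_iz_{i-1}^{b_i}\big)_{1\le i\le n},$$ where $z_0,\dots,z_{n+1}$ are indeterminates. If $p_i(x)\notin k$ and $a_i,b_i\ge2$ for all $i$, then the minimum number of generators of $B_n$ as a $k$-algebra is $n+3$. *)

theory Defs
  imports "HOL-Library.Poly_Mapping" "HOL-Computational_Algebra.Polynomial_Factorial"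
begin

type_synonym ('v, 'k) mpoly = "('v \<Rightarrow>\<^sub>0 nat) \<Rightarrow>\<^sub>0 'k"

definition mconst :: "'k::comm_ring_1 \<Rightarrow> ('v, 'k) mpoly" where
  "mconst c = Poly_Mapping.single 0 c"

definition mvar :: "'v \<Rightarrow> ('v, 'k::comm_ring_1) mpoly" where
  "mvar v = Poly_Mapping.single (Poly_Mapping.single v 1) 1"

datatype var = X | Z nat

definition poly_to_mpoly :: "'k::comm_ring_1 poly \<Rightarrow> (var, 'k) mpoly" where
  "poly_to_mpoly p = (\<Sum>i\<le>degree p. mconst (coeff p i) * mvar X ^ i)"

definition Bn_rel :: "(nat \<Rightarrow> 'k::comm_ring_1 poly) \<Rightarrow> (nat \<Rightarrow> 'k) \<Rightarrow> (nat \<Rightarrow> 'k)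
     \<Rightarrow> (nat \<Rightarrow> nat) \<Rightarrow> (nat \<Rightarrow> nat) \<Rightarrow> nat \<Rightarrow> (var, 'k) mpoly" where
  "Bn_rel p u v a b i = poly_to_mpoly (p i) * mvar (Z (Suc i))
        + mconst (u i) * mvar (Z i) ^ a i + mconst (v i) * mvar (Z (i - 1)) ^ b i"

inductive_set k_subalg :: "('v, 'k::comm_ring_1) mpoly set \<Rightarrow> ('v, 'k) mpoly set"
  for S where
    gen: "s \<in> S \<Longrightarrow> s \<in> k_subalg S"
  | const: "mconst c \<in> k_subalg S"
  | add: "f \<in> k_subalg S \<Longrightarrow> g \<in> k_subalg S \<Longrightarrow> f + g \<in> k_subalg S"
  | mult: "f \<in> k_subalg S \<Longrightarrow> g \<in> k_subalg S \<Longrightarrow> f * g \<in> k_subalg S"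

definition mvars :: "('v, 'k::zero) mpoly \<Rightarrow> 'v set" where
  "mvars f = (\<Union>m\<in>Poly_Mapping.keys f. Poly_Mapping.keys m)"

definition mpoly_ring :: "'v set \<Rightarrow> ('v, 'k::zero) mpoly set" where
  "mpoly_ring V = {f. mvars f \<subseteq> V}"

definition Bn_vars :: "nat \<Rightarrow> var set" where
  "Bn_vars n = insert X (Z ` {0..n+1})"

definition Bn_ideal :: "nat \<Rightarrow> (nat \<Rightarrow> 'k::comm_ring_1 poly) \<Rightarrow> (nat \<Rightarrow> 'k) \<Rightarrow> (nat \<Rightarrow> 'k)
     \<Rightarrow> (nat \<Rightarrow> nat) \<Rightarrow> (nat \<Rightarrow> nat) \<Rightarrow> (var, 'k) mpoly set" where
  "Bn_ideal n p u v a b =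
     {\<Sum>i=1..n. c i * Bn_rel p u v a b i | c. \<forall>i. c i \<in> mpoly_ring (Bn_vars n)}"

text \<open>Elements of the quotient algebra A/I (A = mpoly_ring V, I an ideal of A), given by
  representatives fs in A, generate A/I as a k-algebra: the k-subalgebra of A/I generated by
  their classes is all of A/I, i.e. every element of A is congruent modulo I to an element
  of the k-subalgebra generated by fs.\<close>
definition generates_quotient :: "'v set \<Rightarrow> ('v, 'k::comm_ring_1) mpoly set \<Rightarrow> ('v, 'k) mpoly list \<Rightarrow> bool" where
  "generates_quotient V I fs \<longleftrightarrow> set fs \<subseteq> mpoly_ring V \<and>
     (\<forall>g\<in>mpoly_ring V. \<exists>h \<in> k_subalg (set fs). g - h \<in> I)"

definition min_gens_quotient :: "'v set \<Rightarrow> ('v, 'k::comm_ring_1) mpoly set \<Rightarrow> nat" where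
  "min_gens_quotient V I = (LEAST m. \<exists>fs. length fs = m \<and> generates_quotient V I fs)"

end

theory Submission
  imports Defs "Jordan_Normal_Form.Determinant"
begin

text \<open>The variables \<open>x, z\<^sub>0, \<dots>, z\<^sub>n\<^sub>+\<^sub>1\<close> generate \<open>B\<^sub>n\<close>, so at most \<open>n + 3\<close>
  generators are needed. Conversely, choose a prime \<open>q\<close> of \<open>k[x]\<close> dividing all \<open>p\<^sub>i\<close> (they have
  the same prime factors). At the \<open>k[x]\<close>-valued point \<open>(x, 0, \<dots>, 0)\<close> the gradient of the
  \<open>i\<close>-th relation is \<open>p\<^sub>i\<close> times the \<open>z\<^sub>i\<^sub>+\<^sub>1\<close>-direction, because \<open>a\<^sub>i, b\<^sub>i \<ge> 2\<close>;
  hence modulo \<open>q\<close> all elements of the ideal have zero gradient there. If \<open>f\<^sub>1, \<dots>, f\<^sub>N\<close>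
  generate \<open>B\<^sub>n\<close>, the chain rule then writes each coordinate gradient modulo \<open>q\<close> as a
  \<open>k[x]\<close>-combination of the gradients of the \<open>f\<^sub>j\<close>, so the \<open>(n + 3) \<times> (n + 3)\<close> identity
  matrix factors modulo \<open>q\<close> through \<open>N\<close> dimensions, and comparing determinants gives
  \<open>N \<ge> n + 3\<close>.\<close>

section \<open>Evaluation of multivariate polynomials\<close>

definition eval_monomial :: "('v \<Rightarrow> 'a::comm_semiring_1) \<Rightarrow> ('v \<Rightarrow>\<^sub>0 nat) \<Rightarrow> 'a" where
  "eval_monomial \<sigma> m = (\<Prod>v\<in>Poly_Mapping.keys m. \<sigma> v ^ Poly_Mapping.lookup m v)"

lemma eval_monomial_superset:
  assumes "finite A" "Poly_Mapping.keys m \<subseteq> A"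
  shows "eval_monomial \<sigma> m = (\<Prod>v\<in>A. \<sigma> v ^ Poly_Mapping.lookup m v)"
  unfolding eval_monomial_def
  by (rule prod.mono_neutral_left[OF assms]) (simp add: in_keys_iff)

lemma eval_monomial_add: "eval_monomial \<sigma> (m1 + m2) = eval_monomial \<sigma> m1 * eval_monomial \<sigma> m2"
proof -
  let ?A = "Poly_Mapping.keys m1 \<union> Poly_Mapping.keys m2"
  have "eval_monomial \<sigma> (m1 + m2) = (\<Prod>v\<in>?A. \<sigma> v ^ Poly_Mapping.lookup (m1 + m2) v)"
    by (rule eval_monomial_superset) (auto simp: keys_add)
  also have "\<dots> = (\<Prod>v\<in>?A. \<sigma> v ^ Poly_Mapping.lookup m1 v) * (\<Prod>v\<in>?A. \<sigma> v ^ Poly_Mapping.lookup m2 v)"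
    by (simp add: lookup_add power_add prod.distrib)
  also have "\<dots> = eval_monomial \<sigma> m1 * eval_monomial \<sigma> m2"
    by (subst (1 2) eval_monomial_superset[of ?A]) auto
  finally show ?thesis .
qed

lemma eval_monomial_0 [simp]: "eval_monomial \<sigma> 0 = 1"
  by (simp add: eval_monomial_def)

lemma eval_monomial_single [simp]: "eval_monomial \<sigma> (Poly_Mapping.single v (Suc 0)) = \<sigma> v"
  by (simp add: eval_monomial_def)

definition const_poly_poly :: "'k::comm_ring_1 \<Rightarrow> 'k poly poly" where
  "const_poly_poly c = [:[:c:]:]"

lemma const_poly_poly_simps [simp]:
  "const_poly_poly 0 = 0" "const_poly_poly 1 = 1" "const_poly_poly (- a) = - const_poly_poly a"
  "const_poly_poly (a + b) = const_poly_poly a + const_poly_poly b"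
  "const_poly_poly (a * b) = const_poly_poly a * const_poly_poly b"
  by (simp_all add: const_poly_poly_def one_pCons)

definition mpoly_eval :: "('v \<Rightarrow> 'k::comm_ring_1 poly poly) \<Rightarrow> ('v, 'k) mpoly \<Rightarrow> 'k poly poly" where
  "mpoly_eval \<sigma> f =
     (\<Sum>m\<in>Poly_Mapping.keys f. const_poly_poly (Poly_Mapping.lookup f m) * eval_monomial \<sigma> m)"

lemma mpoly_eval_superset:
  assumes "finite A" "Poly_Mapping.keys f \<subseteq> A"
  shows "mpoly_eval \<sigma> f = (\<Sum>m\<in>A. const_poly_poly (Poly_Mapping.lookup f m) * eval_monomial \<sigma> m)"
  unfolding mpoly_eval_def
  by (rule sum.mono_neutral_left[OF assms]) (simp add: in_keys_iff)

lemma mpoly_eval_add: "mpoly_eval \<sigma> (f + g) = mpoly_eval \<sigma> f + mpoly_eval \<sigma> g"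
proof -
  let ?A = "Poly_Mapping.keys f \<union> Poly_Mapping.keys g"
  let ?ev = "\<lambda>h. (\<Sum>m\<in>?A. const_poly_poly (Poly_Mapping.lookup h m) * eval_monomial \<sigma> m)"
  have "mpoly_eval \<sigma> (f + g) = ?ev (f + g)"
    by (rule mpoly_eval_superset) (auto simp: keys_add)
  also have "\<dots> = ?ev f + ?ev g"
    by (simp add: lookup_add distrib_right sum.distrib)
  also have "\<dots> = mpoly_eval \<sigma> f + mpoly_eval \<sigma> g"
    by (subst (1 2) mpoly_eval_superset[of ?A]) auto
  finally show ?thesis .
qed

lemma mpoly_eval_0 [simp]: "mpoly_eval \<sigma> 0 = 0"
  by (simp add: mpoly_eval_def)

lemma mpoly_eval_uminus: "mpoly_eval \<sigma> (- f) = - mpoly_eval \<sigma> f"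
  by (simp add: mpoly_eval_def sum_negf)

lemma mpoly_eval_diff: "mpoly_eval \<sigma> (f - g) = mpoly_eval \<sigma> f - mpoly_eval \<sigma> g"
  using mpoly_eval_add[of \<sigma> f "- g"] by (simp add: mpoly_eval_uminus)

lemma mpoly_eval_sum: "mpoly_eval \<sigma> (\<Sum>i\<in>I. F i) = (\<Sum>i\<in>I. mpoly_eval \<sigma> (F i))"
  by (induction I rule: infinite_finite_induct) (simp_all add: mpoly_eval_add)

lemma mpoly_eval_single: "mpoly_eval \<sigma> (Poly_Mapping.single m c) = const_poly_poly c * eval_monomial \<sigma> m"
  by (simp add: mpoly_eval_def)

lemma poly_mapping_sum_single_lookup:
  "(\<Sum>m\<in>Poly_Mapping.keys f. Poly_Mapping.single m (Poly_Mapping.lookup f m)) = f"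
  by (rule poly_mapping_eqI) (simp add: lookup_sum lookup_single when_def in_keys_iff)

lemma mpoly_eval_mult: "mpoly_eval \<sigma> (f * g) = mpoly_eval \<sigma> f * mpoly_eval \<sigma> g"
proof -
  have "f * g = (\<Sum>m\<in>Poly_Mapping.keys f. \<Sum>m'\<in>Poly_Mapping.keys g.
      Poly_Mapping.single m (Poly_Mapping.lookup f m) * Poly_Mapping.single m' (Poly_Mapping.lookup g m'))"
    by (subst (1 2) poly_mapping_sum_single_lookup[symmetric]) (simp add: sum_product)
  then have "mpoly_eval \<sigma> (f * g) = (\<Sum>m\<in>Poly_Mapping.keys f. \<Sum>m'\<in>Poly_Mapping.keys g.
      (const_poly_poly (Poly_Mapping.lookup f m) * eval_monomial \<sigma> m) *
      (const_poly_poly (Poly_Mapping.lookup g m') * eval_monomial \<sigma> m'))"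
    by (simp add: mpoly_eval_sum mult_single mpoly_eval_single eval_monomial_add mult_ac)
  also have "\<dots> = mpoly_eval \<sigma> f * mpoly_eval \<sigma> g"
    by (simp add: mpoly_eval_def sum_product)
  finally show ?thesis .
qed

lemma mpoly_eval_1 [simp]: "mpoly_eval \<sigma> 1 = 1"
  using mpoly_eval_single[of \<sigma> 0 1] by simp

lemma mpoly_eval_power: "mpoly_eval \<sigma> (f ^ k) = mpoly_eval \<sigma> f ^ k"
  by (induction k) (simp_all add: mpoly_eval_mult)

lemma mpoly_eval_mconst [simp]: "mpoly_eval \<sigma> (mconst c) = const_poly_poly c"
  by (simp add: mconst_def mpoly_eval_single)

lemma mpoly_eval_mvar [simp]: "mpoly_eval \<sigma> (mvar v) = \<sigma> v"
  by (simp add: mvar_def mpoly_eval_single)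

lemma coeff_0_mpoly_eval_cong:
  assumes "\<And>v. coeff (\<sigma> v) 0 = coeff (\<tau> v) 0"
  shows "coeff (mpoly_eval \<sigma> f) 0 = coeff (mpoly_eval \<tau> f) 0"
proof -
  have "poly (\<sigma> v) 0 = poly (\<tau> v) 0" for v
    using assms by (simp add: poly_0_coeff_0)
  then show ?thesis
    unfolding poly_0_coeff_0[symmetric] mpoly_eval_def eval_monomial_def
    by (simp add: poly_sum poly_prod poly_power)
qed

section \<open>Values and partial derivatives at a point\<close>

definition mpoly_value :: "('v \<Rightarrow> 'k::comm_ring_1 poly) \<Rightarrow> ('v, 'k) mpoly \<Rightarrow> 'k poly" where
  "mpoly_value \<sigma> f = coeff (mpoly_eval (\<lambda>v. [:\<sigma> v:]) f) 0"

text \<open>Evaluating \<open>f\<close> at \<open>\<sigma> + \<epsilon> e\<^sub>w\<close> in \<open>k[x][\<epsilon>]\<close>, the coefficient of \<open>\<epsilon>\<close>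
  is \<open>\<partial>f/\<partial>w\<close> at \<open>\<sigma>\<close>.\<close>

definition mpoly_deriv :: "('v \<Rightarrow> 'k::comm_ring_1 poly) \<Rightarrow> 'v \<Rightarrow> ('v, 'k) mpoly \<Rightarrow> 'k poly" where
  "mpoly_deriv \<sigma> w f = coeff (mpoly_eval (\<lambda>v. [:\<sigma> v, of_bool (v = w):]) f) 1"

lemma coeff_0_mpoly_eval_dual:
  "coeff (mpoly_eval (\<lambda>v. [:\<sigma> v, c v:]) f) 0 = mpoly_value \<sigma> f"
  unfolding mpoly_value_def by (rule coeff_0_mpoly_eval_cong) simp

lemma mpoly_value_add: "mpoly_value \<sigma> (f + g) = mpoly_value \<sigma> f + mpoly_value \<sigma> g"
  by (simp add: mpoly_value_def mpoly_eval_add)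

lemma mpoly_value_mult: "mpoly_value \<sigma> (f * g) = mpoly_value \<sigma> f * mpoly_value \<sigma> g"
  by (simp add: mpoly_value_def mpoly_eval_mult coeff_mult_0)

lemma mpoly_value_sum: "mpoly_value \<sigma> (\<Sum>i\<in>I. F i) = (\<Sum>i\<in>I. mpoly_value \<sigma> (F i))"
  by (simp add: mpoly_value_def mpoly_eval_sum coeff_sum)

lemma mpoly_value_power: "mpoly_value \<sigma> (f ^ k) = mpoly_value \<sigma> f ^ k"
  by (simp add: mpoly_value_def mpoly_eval_power coeff_0_power)

lemma mpoly_value_mconst [simp]: "mpoly_value \<sigma> (mconst c) = [:c:]"
  by (simp add: mpoly_value_def const_poly_poly_def)

lemma mpoly_value_mvar [simp]: "mpoly_value \<sigma> (mvar v) = \<sigma> v"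
  by (simp add: mpoly_value_def)

lemma mpoly_value_poly_to_mpoly: "mpoly_value \<sigma> (poly_to_mpoly p) = pcompose p (\<sigma> X)"
proof -
  have "mpoly_value \<sigma> (poly_to_mpoly p) = (\<Sum>i\<le>degree p. [:coeff p i:] * \<sigma> X ^ i)"
    by (simp add: poly_to_mpoly_def mpoly_value_sum mpoly_value_mult mpoly_value_power)
  also have "\<dots> = pcompose p (\<sigma> X)"
    by (simp add: pcompose_altdef poly_altdef degree_map_poly coeff_map_poly)
  finally show ?thesis .
qed

lemma mpoly_deriv_add: "mpoly_deriv \<sigma> w (f + g) = mpoly_deriv \<sigma> w f + mpoly_deriv \<sigma> w g"
  by (simp add: mpoly_deriv_def mpoly_eval_add)

lemma mpoly_deriv_diff: "mpoly_deriv \<sigma> w (f - g) = mpoly_deriv \<sigma> w f - mpoly_deriv \<sigma> w g"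
  by (simp add: mpoly_deriv_def mpoly_eval_diff)

lemma mpoly_deriv_sum: "mpoly_deriv \<sigma> w (\<Sum>i\<in>I. F i) = (\<Sum>i\<in>I. mpoly_deriv \<sigma> w (F i))"
  by (simp add: mpoly_deriv_def mpoly_eval_sum coeff_sum)

lemma mpoly_deriv_mult:
  "mpoly_deriv \<sigma> w (f * g) = mpoly_value \<sigma> f * mpoly_deriv \<sigma> w g + mpoly_value \<sigma> g * mpoly_deriv \<sigma> w f"
  by (simp add: mpoly_deriv_def mpoly_eval_mult coeff_mult numeral_eq_Suc coeff_0_mpoly_eval_dual mult_ac)

lemma mpoly_deriv_power:
  "mpoly_deriv \<sigma> w (f ^ k) = of_nat k * mpoly_value \<sigma> f ^ (k - 1) * mpoly_deriv \<sigma> w f"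
proof (induction k)
  case 0
  then show ?case by (simp add: mpoly_deriv_def)
next
  case (Suc k)
  then show ?case
    by (cases k) (simp_all add: mpoly_deriv_mult mpoly_value_mult mpoly_value_power algebra_simps)
qed

lemma mpoly_deriv_mconst [simp]: "mpoly_deriv \<sigma> w (mconst c) = 0"
  by (simp add: mpoly_deriv_def const_poly_poly_def)

lemma mpoly_deriv_mvar [simp]: "mpoly_deriv \<sigma> w (mvar v) = of_bool (v = w)"
  by (simp add: mpoly_deriv_def)

lemma k_subalg_0: "0 \<in> k_subalg S"
  using k_subalg.const[of 0 S] by (simp add: mconst_def)

lemma k_subalg_1: "1 \<in> k_subalg S"
  using k_subalg.const[of 1 S] by (simp add: mconst_def)

lemma k_subalg_sum: "(\<And>i. i \<in> I \<Longrightarrow> F i \<in> k_subalg S) \<Longrightarrow> (\<Sum>i\<in>I. F i) \<in> k_subalg S"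
  by (induction I rule: infinite_finite_induct) (simp_all add: k_subalg_0 k_subalg.add)

lemma k_subalg_prod: "(\<And>i. i \<in> I \<Longrightarrow> F i \<in> k_subalg S) \<Longrightarrow> (\<Prod>i\<in>I. F i) \<in> k_subalg S"
  by (induction I rule: infinite_finite_induct) (simp_all add: k_subalg_1 k_subalg.mult)

lemma k_subalg_power: "f \<in> k_subalg S \<Longrightarrow> f ^ e \<in> k_subalg S"
  by (induction e) (simp_all add: k_subalg_1 k_subalg.mult)

lemma mvar_power: "mvar v ^ e = Poly_Mapping.single (Poly_Mapping.single v e) (1::'k::comm_ring_1)"
  by (induction e) (simp_all add: mvar_def mult_single single_add[symmetric] add.commute)

lemma prod_single_1:
  "(\<Prod>v\<in>A. Poly_Mapping.single (g v) (1::'k::comm_ring_1)) = Poly_Mapping.single (\<Sum>v\<in>A. g v) 1"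
  by (induction A rule: infinite_finite_induct) (simp_all add: mult_single)

lemma mpoly_ring_subset_k_subalg:
  "mpoly_ring V \<subseteq> k_subalg (mvar ` V :: ('v, 'k::comm_ring_1) mpoly set)"
proof
  fix f :: "('v, 'k) mpoly"
  assume f: "f \<in> mpoly_ring V"
  have "Poly_Mapping.single m (Poly_Mapping.lookup f m) \<in> k_subalg (mvar ` V)"
    if m: "m \<in> Poly_Mapping.keys f" for m
  proof -
    have "Poly_Mapping.single m (1::'k) = (\<Prod>v\<in>Poly_Mapping.keys m. mvar v ^ Poly_Mapping.lookup m v)"
      by (simp add: mvar_power prod_single_1 poly_mapping_sum_single_lookup)
    also have "\<dots> \<in> k_subalg (mvar ` V)"
      using f m by (intro k_subalg_prod k_subalg_power k_subalg.gen) (auto simp: mpoly_ring_def mvars_def)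
    finally have "mconst (Poly_Mapping.lookup f m) * Poly_Mapping.single m 1 \<in> k_subalg (mvar ` V)"
      by (intro k_subalg.mult k_subalg.const)
    then show ?thesis
      by (simp add: mconst_def mult_single)
  qed
  then have "(\<Sum>m\<in>Poly_Mapping.keys f. Poly_Mapping.single m (Poly_Mapping.lookup f m)) \<in> k_subalg (mvar ` V)"
    by (rule k_subalg_sum)
  then show "f \<in> k_subalg (mvar ` V)"
    by (simp add: poly_mapping_sum_single_lookup)
qed

lemma generates_quotient_mvars:
  fixes I :: "('v, 'k::comm_ring_1) mpoly set"
  assumes "set vs = V" "0 \<in> I"
  shows "generates_quotient V I (map mvar vs)"
  unfolding generates_quotient_def
proof (intro conjI ballI)
  show "set (map mvar vs) \<subseteq> mpoly_ring V"
    using assms(1) by (auto simp: mpoly_ring_def mvars_def mvar_def)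
next
  fix g :: "('v, 'k) mpoly"
  assume "g \<in> mpoly_ring V"
  then have "g \<in> k_subalg (set (map mvar vs))"
    using mpoly_ring_subset_k_subalg assms(1) by auto
  with assms(2) show "\<exists>h\<in>k_subalg (set (map mvar vs)). g - h \<in> I"
    by force
qed

lemma mpoly_deriv_k_subalg:
  assumes "h \<in> k_subalg (set fs)"
  shows "\<exists>c. \<forall>w. mpoly_deriv \<sigma> w h = (\<Sum>j<length fs. c j * mpoly_deriv \<sigma> w (fs ! j))"
  using assms
proof (induction rule: k_subalg.induct)
  case (gen s)
  then obtain j0 where j0: "j0 < length fs" "s = fs ! j0"
    by (auto simp: in_set_conv_nth)
  moreover have "{..<length fs} \<inter> {j. j = j0} = {j0}"
    using j0 by auto
  ultimately have "mpoly_deriv \<sigma> w s = (\<Sum>j<length fs. of_bool (j = j0) * mpoly_deriv \<sigma> w (fs ! j))" for w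
    by simp
  then show ?case
    by (intro exI[of _ "\<lambda>j. of_bool (j = j0)"]) blast
next
  case (const c)
  show ?case by (rule exI[of _ "\<lambda>_. 0"]) simp
next
  case (add f g)
  then obtain cf cg where
    "\<forall>w. mpoly_deriv \<sigma> w f = (\<Sum>j<length fs. cf j * mpoly_deriv \<sigma> w (fs ! j))"
    "\<forall>w. mpoly_deriv \<sigma> w g = (\<Sum>j<length fs. cg j * mpoly_deriv \<sigma> w (fs ! j))"
    by blast
  then show ?case
    by (intro exI[of _ "\<lambda>j. cf j + cg j"]) (simp add: mpoly_deriv_add distrib_right sum.distrib)
next
  case (mult f g)
  then obtain cf cg where
    "\<forall>w. mpoly_deriv \<sigma> w f = (\<Sum>j<length fs. cf j * mpoly_deriv \<sigma> w (fs ! j))"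
    "\<forall>w. mpoly_deriv \<sigma> w g = (\<Sum>j<length fs. cg j * mpoly_deriv \<sigma> w (fs ! j))"
    by blast
  then show ?case
    by (intro exI[of _ "\<lambda>j. mpoly_value \<sigma> f * cg j + mpoly_value \<sigma> g * cf j"])
      (simp add: mpoly_deriv_mult sum_distrib_left sum.distrib algebra_simps)
qed

section \<open>Congruences of determinants\<close>

lemma dvd_prod_diff:
  fixes f g :: "'b \<Rightarrow> 'a::comm_ring_1"
  shows "(\<And>i. i \<in> I \<Longrightarrow> q dvd f i - g i) \<Longrightarrow> q dvd prod f I - prod g I"
proof (induction I rule: infinite_finite_induct)
  case (insert x F)
  have "prod f (insert x F) - prod g (insert x F) = f x * (prod f F - prod g F) + (f x - g x) * prod g F"
    using insert.hyps by (simp add: algebra_simps)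
  then show ?case
    using insert by simp
qed auto

lemma dvd_det_diff:
  assumes A: "A \<in> carrier_mat m m" and B: "B \<in> carrier_mat m m"
    and entries: "\<And>i j. i < m \<Longrightarrow> j < m \<Longrightarrow> q dvd A $$ (i, j) - B $$ (i, j)"
  shows "q dvd det A - det B"
proof -
  have "det A - det B = (\<Sum>\<pi> | \<pi> permutes {0..<m}.
      signof \<pi> * ((\<Prod>i = 0..<m. A $$ (i, \<pi> i)) - (\<Prod>i = 0..<m. B $$ (i, \<pi> i))))"
    unfolding det_def'[OF A] det_def'[OF B] by (simp add: sum_subtractf right_diff_distrib)
  also have "q dvd \<dots>"
  proof (rule dvd_sum)
    fix \<pi>
    assume "\<pi> \<in> {\<pi>. \<pi> permutes {0..<m}}"
    then have "\<pi> i < m" if "i < m" for i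
      using that permutes_in_image by fastforce
    then show "q dvd signof \<pi> * ((\<Prod>i = 0..<m. A $$ (i, \<pi> i)) - (\<Prod>i = 0..<m. B $$ (i, \<pi> i)))"
      by (intro dvd_mult dvd_prod_diff entries) auto
  qed
  finally show ?thesis .
qed

text \<open>Otherwise pad both factors with zeros to square matrices: their product has determinant
  \<open>0\<close>, which cannot be congruent to \<open>det 1 = 1\<close>.\<close>

lemma le_if_identity_factors_mod:
  fixes C F :: "nat \<Rightarrow> nat \<Rightarrow> 'a::comm_ring_1"
  assumes "\<not> q dvd 1"
    and factors: "\<And>s t. s < M \<Longrightarrow> t < M \<Longrightarrow> q dvd of_bool (s = t) - (\<Sum>j<N. C s j * F j t)"
  shows "M \<le> N"
proof (rule ccontr)
  assume "\<not> M \<le> N"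
  then have "N < M" by simp
  define A where "A = mat M M (\<lambda>(s, j). if j < N then C s j else 0)"
  define B where "B = mat M M (\<lambda>(j, t). if j < N then F j t else 0)"
  have A_carrier: "A \<in> carrier_mat M M" and B_carrier: "B \<in> carrier_mat M M"
    by (auto simp: A_def B_def)
  have AB: "(A * B) $$ (s, t) = (\<Sum>j<N. C s j * F j t)" if "s < M" "t < M" for s t
  proof -
    have "(A * B) $$ (s, t) = (\<Sum>j\<in>{0..<M}. (if j < N then C s j else 0) * (if j < N then F j t else 0))"
      using that by (simp add: A_def B_def scalar_prod_def)
    also have "\<dots> = (\<Sum>j\<in>{0..<N}. C s j * F j t)"
      by (rule sum.mono_neutral_cong_right) (use \<open>N < M\<close> in auto)
    finally show ?thesis
      by (simp add: atLeast0LessThan)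
  qed
  have "det B = 0"
  proof -
    have "(\<Prod>i = 0..<M. B $$ (i, \<pi> i)) = 0" if "\<pi> permutes {0..<M}" for \<pi>
    proof -
      have "\<pi> N < M"
        using that \<open>N < M\<close> permutes_in_image by fastforce
      then have "B $$ (N, \<pi> N) = 0"
        using \<open>N < M\<close> by (simp add: B_def)
      then show ?thesis
        using \<open>N < M\<close> by (intro prod_zero) auto
    qed
    then show ?thesis
      unfolding det_def'[OF B_carrier] by simp
  qed
  then have "det (A * B) = 0"
    by (simp add: det_mult[OF A_carrier B_carrier])
  moreover have "q dvd det (1\<^sub>m M) - det (A * B)"
  proof (rule dvd_det_diff)
    fix s t
    assume "s < M" "t < M"
    then show "q dvd 1\<^sub>m M $$ (s, t) - (A * B) $$ (s, t)"
      using factors[of s t] unfolding AB[OF \<open>s < M\<close> \<open>t < M\<close>] by (cases "s = t") simp_all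
  qed (use A_carrier B_carrier in auto)
  ultimately show False
    using assms(1) by simp
qed

text \<open>Modulo \<open>q\<close> the gradients of the variables stay independent at \<open>\<sigma>\<close>, whereas by the
  chain rule they are combinations of the gradients of the generators.\<close>

lemma card_le_length_if_generates_quotient:
  fixes \<sigma> :: "'v \<Rightarrow> 'k::comm_ring_1 poly"
  assumes V: "finite V" and q: "\<not> q dvd 1"
    and I: "\<And>g w. g \<in> I \<Longrightarrow> w \<in> V \<Longrightarrow> q dvd mpoly_deriv \<sigma> w g"
    and gen: "generates_quotient V I fs"
  shows "card V \<le> length fs"
proof -
  have "\<forall>w\<in>V. \<exists>c. \<forall>w'\<in>V. q dvd of_bool (w = w') - (\<Sum>j<length fs. c j * mpoly_deriv \<sigma> w' (fs ! j))"
  proof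
    fix w
    assume w: "w \<in> V"
    have "mvar w \<in> mpoly_ring V"
      using w by (simp add: mpoly_ring_def mvars_def mvar_def)
    with gen obtain h where h: "h \<in> k_subalg (set fs)" "mvar w - h \<in> I"
      unfolding generates_quotient_def by blast
    obtain c where c: "\<And>w'. mpoly_deriv \<sigma> w' h = (\<Sum>j<length fs. c j * mpoly_deriv \<sigma> w' (fs ! j))"
      using mpoly_deriv_k_subalg[OF h(1)] by blast
    have "q dvd of_bool (w = w') - (\<Sum>j<length fs. c j * mpoly_deriv \<sigma> w' (fs ! j))" if "w' \<in> V" for w'
      using I[OF h(2) that] by (simp add: mpoly_deriv_diff c eq_commute[of w])
    then show "\<exists>c. \<forall>w'\<in>V. q dvd of_bool (w = w') - (\<Sum>j<length fs. c j * mpoly_deriv \<sigma> w' (fs ! j))"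
      by blast
  qed
  then obtain C where C: "\<And>w w'. w \<in> V \<Longrightarrow> w' \<in> V \<Longrightarrow>
      q dvd of_bool (w = w') - (\<Sum>j<length fs. C w j * mpoly_deriv \<sigma> w' (fs ! j))"
    by metis
  obtain e where e: "bij_betw e {0..<card V} V"
    using ex_bij_betw_nat_finite[OF V] by blast
  show ?thesis
  proof (rule le_if_identity_factors_mod[OF q])
    fix s t
    assume "s < card V" "t < card V"
    then have "e s \<in> V" "e t \<in> V" "(e s = e t) = (s = t)"
      using e by (auto simp: bij_betw_def inj_on_eq_iff)
    then show "q dvd of_bool (s = t) - (\<Sum>j<length fs. C (e s) j * mpoly_deriv \<sigma> (e t) (fs ! j))"
      using C[of "e s" "e t"] by simp
  qed
qed

section \<open>The algebra \<open>B\<^sub>n\<close>\<close>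

definition xaxis_point :: "var \<Rightarrow> 'k::comm_ring_1 poly" where
  "xaxis_point v = (case v of X \<Rightarrow> [:0, 1:] | Z j \<Rightarrow> 0)"

lemma pcompose_id_right [simp]: "pcompose p [:0, 1:] = (p :: 'a::comm_semiring_1 poly)"
  by (induction p) (simp_all add: pcompose_pCons)

lemma mpoly_value_Bn_rel:
  assumes "a i > 0" "b i > 0"
  shows "mpoly_value xaxis_point (Bn_rel p u v a b i) = 0"
  using assms
  by (simp add: Bn_rel_def xaxis_point_def mpoly_value_add mpoly_value_mult mpoly_value_power zero_power)

lemma mpoly_deriv_Bn_rel:
  assumes "a i \<ge> 2" "b i \<ge> 2"
  shows "mpoly_deriv xaxis_point w (Bn_rel p u v a b i) = (if w = Z (Suc i) then p i else 0)"
  using assms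
  by (simp add: Bn_rel_def xaxis_point_def mpoly_deriv_add mpoly_deriv_mult mpoly_deriv_power
      mpoly_value_poly_to_mpoly mpoly_value_power zero_power)

lemma dvd_mpoly_deriv_Bn_ideal:
  assumes "g \<in> Bn_ideal n p u v a b"
    and "\<forall>i\<in>{1..n}. q dvd p i" "\<forall>i\<in>{1..n}. a i \<ge> 2 \<and> b i \<ge> 2"
  shows "q dvd mpoly_deriv xaxis_point w g"
proof -
  obtain c where "g = (\<Sum>i=1..n. c i * Bn_rel p u v a b i)"
    using assms(1) unfolding Bn_ideal_def by blast
  then show ?thesis
    using assms(2,3)
    by (auto simp: mpoly_deriv_sum mpoly_deriv_mult mpoly_value_Bn_rel mpoly_deriv_Bn_rel intro!: dvd_sum)
qed

lemma zero_in_Bn_ideal: "0 \<in> Bn_ideal n p u v a b"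
  unfolding Bn_ideal_def
  by (rule CollectI, rule exI[of _ "\<lambda>_. 0"]) (simp add: mpoly_ring_def mvars_def)

lemma set_Bn_vars_list: "set (X # map Z [0..<n + 2]) = Bn_vars n"
  by (auto simp: Bn_vars_def)

lemma finite_Bn_vars: "finite (Bn_vars n)"
  by (simp add: Bn_vars_def)

lemma card_Bn_vars: "card (Bn_vars n) = n + 3"
proof -
  have "X \<notin> Z ` {0..n + 1}" "inj_on Z {0..n + 1}"
    by (auto simp: inj_on_def)
  then show ?thesis
    by (simp add: Bn_vars_def card_image)
qed

lemma ex_common_prime_factor:
  fixes p :: "'i \<Rightarrow> 'a::factorial_semiring_gcd"
  assumes "i0 \<in> I" "p i0 \<noteq> 0" "\<not> is_unit (p i0)"
    and "\<forall>i\<in>I. \<forall>j\<in>I. prime_factors (p i) = prime_factors (p j)"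
  obtains q where "prime q" "\<forall>i\<in>I. q dvd p i"
proof -
  obtain q where "prime q" "q dvd p i0"
    using assms(2,3) prime_divisor_exists by blast
  then have "q \<in> prime_factors (p i)" if "i \<in> I" for i
    using assms(1,2,4) that by (metis in_prime_factors_iff)
  then show ?thesis
    using that \<open>prime q\<close> by (meson in_prime_factors_imp_dvd)
qed

theorem proposition4p3:
  fixes n :: nat and u v :: "nat \<Rightarrow> 'k::field_gcd" and p :: "nat \<Rightarrow> 'k poly" and a b :: "nat \<Rightarrow> nat"
  assumes "n \<ge> 1"
    and "\<forall>i\<in>{1..n}. u i \<noteq> 0 \<and> v i \<noteq> 0"
    and "\<forall>i\<in>{1..n}. p i \<noteq> 0"
    and "\<forall>i\<in>{1..n}. \<forall>j\<in>{1..n}. prime_factors (p i) = prime_factors (p j)"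
    and "\<forall>i\<in>{1..n}. a i > 0 \<and> b i > 0"
    and "\<forall>i\<in>{1..n}. gcd (a i) (\<Prod>j=1..i. b j) = 1"
    and "\<forall>i\<in>{1..n}. degree (p i) > 0"
    and "\<forall>i\<in>{1..n}. a i \<ge> 2 \<and> b i \<ge> 2"
  shows "min_gens_quotient (Bn_vars n) (Bn_ideal n p u v a b) = n + 3"
proof -
  have "1 \<in> {1..n}"
    using assms(1) by simp
  moreover have "p 1 \<noteq> 0" "\<not> is_unit (p 1)"
    using assms(3,7) calculation by (auto simp: is_unit_iff_degree)
  ultimately obtain q :: "'k poly" where q: "prime q" "\<forall>i\<in>{1..n}. q dvd p i"
    using ex_common_prime_factor[of 1 "{1..n}" p] assms(4) by blast
  have nonunit: "\<not> q dvd 1"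
    using q(1) by (simp add: not_prime_unit)
  have ideal: "\<And>g w. g \<in> Bn_ideal n p u v a b \<Longrightarrow> w \<in> Bn_vars n \<Longrightarrow>
      q dvd mpoly_deriv xaxis_point w g"
    using dvd_mpoly_deriv_Bn_ideal q(2) assms(8) by blast
  have lower: "n + 3 \<le> length fs" if "generates_quotient (Bn_vars n) (Bn_ideal n p u v a b) fs" for fs
    using card_le_length_if_generates_quotient[OF finite_Bn_vars nonunit ideal that]
    by (simp add: card_Bn_vars)
  have upper: "generates_quotient (Bn_vars n) (Bn_ideal n p u v a b) (map mvar (X # map Z [0..<n + 2]))"
    by (rule generates_quotient_mvars[OF set_Bn_vars_list zero_in_Bn_ideal])
  show ?thesis
    unfolding min_gens_quotient_def
  proof (rule Least_equality)
    show "\<exists>fs. length fs = n + 3 \<and> generates_quotient (Bn_vars n) (Bn_ideal n p u v a b) fs"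
      using upper by (intro exI[of _ "map mvar (X # map Z [0..<n + 2])"]) simp
  qed (use lower in blast)
qed

end
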